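(* Fix $\gamma\neq0$. Consider the subclass of equations $i\psi_t+\psi_{xx}+|\psi|^\gamma\psi+V\psi=0$ with stationary potentials, i.e. $V=V(x)$ an arbitrary smooth complex-valued function of $x$. The intersection of the maximal Lie invariance algebras of all equations in this subclass is $\langle M,\ D(1)\rangle=\langle M,\ \partial_t\rangle$.
   Context: $M=i(\psi\partial_\psi-\psi^*\partial_{\psi^*})$, and $D(1)=\partial_t$. Lie symmetries are vector fields on the space of $(t,x,\psi,\psi^* )$, with $\psi^*$ treated as an independent variable. *)

theory Defs
  imports "HOL-Analysis.Analysis"
begin

fun Ck :: "nat \<Rightarrow> ('a::real_normed_vector \<Rightarrow> 'b::real_normed_vector) \<Rightarrow> bool" where
  "Ck 0 f = continuous_on UNIV f"
| "Ck (Suc k) f = ((\<forall>p. f differentiable (at p)) \<and>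
                    (\<forall>e. Ck k (\<lambda>p. frechet_derivative f (at p) e)))"

definition smooth :: "('a::real_normed_vector \<Rightarrow> 'b::real_normed_vector) \<Rightarrow> bool" where
  "smooth f \<longleftrightarrow> (\<forall>k. Ck k f)"

definition dT :: "(real \<Rightarrow> real \<Rightarrow> complex) \<Rightarrow> real \<Rightarrow> real \<Rightarrow> complex" where
  "dT f t x = vector_derivative (\<lambda>s. f s x) (at t)"

definition dX :: "(real \<Rightarrow> real \<Rightarrow> complex) \<Rightarrow> real \<Rightarrow> real \<Rightarrow> complex" where
  "dX f t x = vector_derivative (\<lambda>s. f t s) (at x)"

text \<open>Nonlinearity |psi|^gamma psi and its directional (real) derivative in
  direction w, i.e. the action of eta d/dpsi + conj(eta) d/dpsi* on it.\<close>

definition NL :: "real \<Rightarrow> complex \<Rightarrow> complex" where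
  "NL \<gamma> z = complex_of_real (cmod z powr \<gamma>) * z"

definition dNL :: "real \<Rightarrow> complex \<Rightarrow> complex \<Rightarrow> complex" where
  "dNL \<gamma> z w = vector_derivative (\<lambda>s. NL \<gamma> (z + complex_of_real s * w)) (at 0)"

definition Delta :: "real \<Rightarrow> (real \<Rightarrow> complex) \<Rightarrow> (real \<Rightarrow> real \<Rightarrow> complex) \<Rightarrow> real \<Rightarrow> real \<Rightarrow> complex" where
  "Delta \<gamma> V \<psi> t x = \<i> * dT \<psi> t x + dX (dX \<psi>) t x + NL \<gamma> (\<psi> t x) + V x * \<psi> t x"

text \<open>A point vector field Q = tau d_t + xi d_x + eta d_psi + conj(eta) d_psi*
  (tau, xi real; coefficients depend on (t,x,psi), psi in C = R^2, i.e. on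
  (t,x,psi,psi*)). Characteristic along psi and second-prolongation
  coefficients eta^t, eta^xx, with total derivatives realised along psi.\<close>

definition charQ :: "(real \<Rightarrow> real \<Rightarrow> complex \<Rightarrow> real) \<Rightarrow> (real \<Rightarrow> real \<Rightarrow> complex \<Rightarrow> real)
    \<Rightarrow> (real \<Rightarrow> real \<Rightarrow> complex \<Rightarrow> complex) \<Rightarrow> (real \<Rightarrow> real \<Rightarrow> complex) \<Rightarrow> real \<Rightarrow> real \<Rightarrow> complex" where
  "charQ \<tau> \<xi> \<eta> \<psi> t x = \<eta> t x (\<psi> t x)
      - complex_of_real (\<tau> t x (\<psi> t x)) * dT \<psi> t x
      - complex_of_real (\<xi> t x (\<psi> t x)) * dX \<psi> t x"

definition eta_t :: "(real \<Rightarrow> real \<Rightarrow> complex \<Rightarrow> real) \<Rightarrow> (real \<Rightarrow> real \<Rightarrow> complex \<Rightarrow> real)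
    \<Rightarrow> (real \<Rightarrow> real \<Rightarrow> complex \<Rightarrow> complex) \<Rightarrow> (real \<Rightarrow> real \<Rightarrow> complex) \<Rightarrow> real \<Rightarrow> real \<Rightarrow> complex" where
  "eta_t \<tau> \<xi> \<eta> \<psi> t x = dT (charQ \<tau> \<xi> \<eta> \<psi>) t x
      + complex_of_real (\<tau> t x (\<psi> t x)) * dT (dT \<psi>) t x
      + complex_of_real (\<xi> t x (\<psi> t x)) * dX (dT \<psi>) t x"

definition eta_xx :: "(real \<Rightarrow> real \<Rightarrow> complex \<Rightarrow> real) \<Rightarrow> (real \<Rightarrow> real \<Rightarrow> complex \<Rightarrow> real)
    \<Rightarrow> (real \<Rightarrow> real \<Rightarrow> complex \<Rightarrow> complex) \<Rightarrow> (real \<Rightarrow> real \<Rightarrow> complex) \<Rightarrow> real \<Rightarrow> real \<Rightarrow> complex" where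
  "eta_xx \<tau> \<xi> \<eta> \<psi> t x = dX (dX (charQ \<tau> \<xi> \<eta> \<psi>)) t x
      + complex_of_real (\<tau> t x (\<psi> t x)) * dT (dX (dX \<psi>)) t x
      + complex_of_real (\<xi> t x (\<psi> t x)) * dX (dX (dX \<psi>)) t x"

definition prQDelta :: "real \<Rightarrow> (real \<Rightarrow> complex) \<Rightarrow> (real \<Rightarrow> real \<Rightarrow> complex \<Rightarrow> real) \<Rightarrow> (real \<Rightarrow> real \<Rightarrow> complex \<Rightarrow> real)
    \<Rightarrow> (real \<Rightarrow> real \<Rightarrow> complex \<Rightarrow> complex) \<Rightarrow> (real \<Rightarrow> real \<Rightarrow> complex) \<Rightarrow> real \<Rightarrow> real \<Rightarrow> complex" where
  "prQDelta \<gamma> V \<tau> \<xi> \<eta> \<psi> t x =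
      \<i> * eta_t \<tau> \<xi> \<eta> \<psi> t x + eta_xx \<tau> \<xi> \<eta> \<psi> t x
      + dNL \<gamma> (\<psi> t x) (\<eta> t x (\<psi> t x))
      + complex_of_real (\<xi> t x (\<psi> t x)) * vector_derivative V (at x) * \<psi> t x
      + V x * \<eta> t x (\<psi> t x)"

text \<open>Lie symmetry (infinitesimal invariance criterion): smooth coefficients and
  pr^(2) Q Delta = 0 on every second-order jet (realised by a smooth psi at a
  point) lying on the manifold Delta = 0 (with psi <> 0).\<close>

definition lie_sym :: "real \<Rightarrow> (real \<Rightarrow> complex) \<Rightarrow> (real \<Rightarrow> real \<Rightarrow> complex \<Rightarrow> real) \<Rightarrow> (real \<Rightarrow> real \<Rightarrow> complex \<Rightarrow> real)
    \<Rightarrow> (real \<Rightarrow> real \<Rightarrow> complex \<Rightarrow> complex) \<Rightarrow> bool" where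
  "lie_sym \<gamma> V \<tau> \<xi> \<eta> \<longleftrightarrow>
     smooth (\<lambda>(t,x,z). \<tau> t x z) \<and> smooth (\<lambda>(t,x,z). \<xi> t x z) \<and> smooth (\<lambda>(t,x,z). \<eta> t x z) \<and>
     (\<forall>\<psi> t x. smooth (\<lambda>(t,x). \<psi> t x) \<and> \<psi> t x \<noteq> 0 \<and> Delta \<gamma> V \<psi> t x = 0
        \<longrightarrow> prQDelta \<gamma> V \<tau> \<xi> \<eta> \<psi> t x = 0)"

definition max_lie_alg :: "real \<Rightarrow> (real \<Rightarrow> complex)
   \<Rightarrow> ((real \<Rightarrow> real \<Rightarrow> complex \<Rightarrow> real) \<times> (real \<Rightarrow> real \<Rightarrow> complex \<Rightarrow> real) \<times> (real \<Rightarrow> real \<Rightarrow> complex \<Rightarrow> complex)) set" where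
  "max_lie_alg \<gamma> V = {(\<tau>, \<xi>, \<eta>). lie_sym \<gamma> V \<tau> \<xi> \<eta>}"

end

theory Submission
  imports Defs
begin

(*
  The invariance criterion is tested on the bilinear functions
  psi = z + alpha (s - t) + beta (y - x) + mu (s - t) (y - x), with a constant potential
  chosen so that psi solves the equation at (t, x); this gives determining equations at every
  point with psi <> 0. Two potentials with different slopes force xi = 0. Comparing jets gives
  tau_x = tau_psi = 0 and eta_psi = eta / psi + tau_t, so tau depends on t only and eta / psi is
  a primitive of tau_t / psi on the punctured plane; going once around the origin forces
  tau_t = 0. Hence eta = phi(t, x) psi. The equation at psi = 1 and psi = 2 then gives
  Re phi = 0 (here gamma <> 0 is used) and i phi_t + phi_xx = 0, and the jet with beta = 1
  gives phi_x = 0, so phi is a constant in i R. Conversely d_t and M are symmetries of every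
  equation of the class.
*)

section \<open>Smooth maps\<close>

lemma Ck_SucD: "Ck (Suc k) f \<Longrightarrow> Ck k f"
proof (induction k arbitrary: f)
  case 0
  then have "\<forall>p. f differentiable (at p)" by simp
  then have "continuous_on UNIV f"
    by (intro continuous_at_imp_continuous_on ballI differentiable_imp_continuous_within) blast
  then show ?case by simp
next
  case (Suc k)
  then show ?case by (subst Ck.simps(2)) (simp only: Ck.simps(2)[of "Suc k"], blast)
qed

lemma Ck_const: "Ck k (\<lambda>p :: 'a::real_normed_vector. c)"
proof (induction k arbitrary: c)
  case 0
  then show ?case by simp
next
  case (Suc k)
  have "frechet_derivative (\<lambda>p :: 'a. c) (at p) = (\<lambda>h. 0)" for p
    by (metis frechet_derivative_at has_derivative_const)
  then show ?case using Suc.IH by simp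
qed

lemma Ck_bounded_linear:
  assumes "bounded_linear L"
  shows "Ck k L"
proof (cases k)
  case 0
  then show ?thesis using assms by (simp add: linear_continuous_on)
next
  case (Suc j)
  have "frechet_derivative L (at p) = L" for p
    by (metis assms frechet_derivative_at bounded_linear_imp_has_derivative)
  then show ?thesis
    using Suc assms by (simp add: Ck_const bounded_linear_imp_differentiable)
qed

lemma Ck_add: "Ck k f \<Longrightarrow> Ck k g \<Longrightarrow> Ck k (\<lambda>p. f p + g p)"
proof (induction k arbitrary: f g)
  case 0
  then show ?case by (simp add: continuous_on_add)
next
  case (Suc k)
  have df: "f differentiable (at p)" and dg: "g differentiable (at p)" for p
    using Suc.prems by simp_all
  have "frechet_derivative (\<lambda>p. f p + g p) (at p) e
          = frechet_derivative f (at p) e + frechet_derivative g (at p) e" for p e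
    using fun_cong[OF frechet_derivative_at[OF has_derivative_add[OF
            df[of p, unfolded frechet_derivative_works] dg[of p, unfolded frechet_derivative_works]]], of e]
    by simp
  then show ?case using Suc df dg by simp
qed

lemma Ck_mult:
  fixes f g :: "'a::real_normed_vector \<Rightarrow> 'b::real_normed_algebra"
  shows "Ck k f \<Longrightarrow> Ck k g \<Longrightarrow> Ck k (\<lambda>p. f p * g p)"
proof (induction k arbitrary: f g)
  case 0
  then show ?case by (simp add: continuous_on_mult)
next
  case (Suc k)
  have df: "f differentiable (at p)" and dg: "g differentiable (at p)" for p
    using Suc.prems by simp_all
  have "frechet_derivative (\<lambda>p. f p * g p) (at p) e
          = f p * frechet_derivative g (at p) e + frechet_derivative f (at p) e * g p" for p e
    using fun_cong[OF frechet_derivative_at[OF has_derivative_mult[OF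
            df[of p, unfolded frechet_derivative_works] dg[of p, unfolded frechet_derivative_works]]], of e]
    by simp
  moreover have "Ck k f" "Ck k g" using Suc.prems Ck_SucD by blast+
  ultimately show ?case using Suc df dg by (simp add: Ck_add)
qed

lemma smooth_const: "smooth (\<lambda>p. c)"
  by (simp add: smooth_def Ck_const)

lemma smooth_bounded_linear: "bounded_linear L \<Longrightarrow> smooth L"
  by (simp add: smooth_def Ck_bounded_linear)

lemma smooth_add: "smooth f \<Longrightarrow> smooth g \<Longrightarrow> smooth (\<lambda>p. f p + g p)"
  by (simp add: smooth_def Ck_add)

lemma smooth_mult:
  fixes f g :: "'a::real_normed_vector \<Rightarrow> 'b::real_normed_algebra"
  shows "smooth f \<Longrightarrow> smooth g \<Longrightarrow> smooth (\<lambda>p. f p * g p)"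
  by (simp add: smooth_def Ck_mult)

lemma smooth_last_component: "smooth (\<lambda>(t::real, x::real, z::'a::real_normed_vector). z)"
  using smooth_bounded_linear[OF bounded_linear_compose[OF bounded_linear_snd bounded_linear_snd]]
  by (simp add: o_def case_prod_beta')

lemma smooth_has_derivative:
  "smooth f \<Longrightarrow> (f has_derivative frechet_derivative f (at p)) (at p)"
  unfolding smooth_def using Ck.simps(2)[of 0 f] frechet_derivative_works by blast

lemma smooth_frechet_derivative:
  "smooth f \<Longrightarrow> smooth (\<lambda>p. frechet_derivative f (at p) v)"
  unfolding smooth_def by (metis Ck.simps(2))

lemma smooth_isCont: "smooth f \<Longrightarrow> isCont f p"
  using smooth_has_derivative has_derivative_continuous by blast

lemma linear_frechet_derivative_smooth: "smooth f \<Longrightarrow> linear (frechet_derivative f (at p))"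
  using smooth_has_derivative has_derivative_linear by blast

lemma frechet_derivative_smooth_add:
  "smooth F \<Longrightarrow> frechet_derivative F (at p) (u + v) = frechet_derivative F (at p) u + frechet_derivative F (at p) v"
  using linear_add[OF linear_frechet_derivative_smooth] .

lemma frechet_derivative_smooth_minus:
  "smooth F \<Longrightarrow> frechet_derivative F (at p) (- u) = - frechet_derivative F (at p) u"
  using linear_neg[OF linear_frechet_derivative_smooth] .

lemma frechet_derivative_smooth_scaleR:
  "smooth F \<Longrightarrow> frechet_derivative F (at p) (c *\<^sub>R u) = c *\<^sub>R frechet_derivative F (at p) u"
  using linear_scale[OF linear_frechet_derivative_smooth] .

lemma isCont_eq_off_point:
  fixes f g :: "'a::{perfect_space, t2_space} \<Rightarrow> 'b::t2_space"
  assumes "isCont f a" "isCont g a" "\<And>z. z \<noteq> a \<Longrightarrow> f z = g z"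
  shows "f a = g a"
proof -
  have "\<forall>\<^sub>F z in at a. g z = f z" using assms(3) by (auto simp: eventually_at_filter)
  with assms(2) have "(f \<longlongrightarrow> g a) (at a)" unfolding isCont_def by (rule Lim_transform_eventually)
  with assms(1) show ?thesis unfolding isCont_def using tendsto_unique[OF at_neq_bot] by blast
qed

lemma isCont_smooth_section:
  assumes "smooth F"
  shows "isCont (\<lambda>z. F (t, x, z)) w"
proof -
  have "isCont (\<lambda>z. (t, x, z)) w" by (intro continuous_intros)
  from isCont_o2[OF this smooth_isCont[OF assms]] show ?thesis .
qed

lemma smooth_section_eq_at_0:
  fixes G :: "real \<Rightarrow> real \<Rightarrow> complex \<Rightarrow> 'b::real_normed_vector"
  assumes "smooth (\<lambda>(t, x, z). G t x z)" "isCont g 0" "\<And>z. z \<noteq> 0 \<Longrightarrow> G t x z = g z"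
  shows "G t x 0 = g 0"
  using isCont_eq_off_point[where f = "G t x" and g = g and a = 0]
    isCont_smooth_section[OF assms(1), where t = t and x = x and w = 0] assms(2,3)
  by simp

lemma has_vector_derivative_complex_line:
  "((\<lambda>s. c + complex_of_real s * w) has_vector_derivative w) (at s)"
  by (auto intro!: derivative_eq_intros simp: has_vector_derivative_def scaleR_conv_of_real)

lemma has_vector_derivative_shifted_line:
  "((\<lambda>r. c + w * complex_of_real (r - a)) has_vector_derivative w) (at r)"
  by (auto intro!: derivative_eq_intros simp: has_vector_derivative_def scaleR_conv_of_real algebra_simps)

lemma has_vector_derivative_complex_of_real:
  "(g has_vector_derivative g') F \<Longrightarrow> ((\<lambda>r. complex_of_real (g r)) has_vector_derivative complex_of_real g') F"
  by (rule bounded_linear.has_vector_derivative[OF bounded_linear_of_real])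

lemma has_vector_derivative_cis: "((\<lambda>\<theta>. cis (c * \<theta>)) has_vector_derivative c * \<i> * cis (c * \<theta>)) (at \<theta>)"
  using has_derivative_cis[OF has_derivative_mult_right[OF has_derivative_ident], of c \<theta> UNIV]
  by (simp add: has_vector_derivative_def scaleR_conv_of_real ac_simps)

lemma has_vector_derivative_zero_imp_eq:
  fixes f :: "real \<Rightarrow> 'a::real_normed_vector"
  assumes "\<And>s. (f has_vector_derivative 0) (at s)"
  shows "f a = f b"
proof -
  obtain c where "\<And>s. s \<in> UNIV \<Longrightarrow> f s = c"
    by (rule has_vector_derivative_zero_constant[of UNIV f]) (auto intro: has_vector_derivative_at_within assms)
  then show ?thesis by simp
qed

lemma has_vector_derivative_smooth_comp:
  assumes "smooth F" "(c has_vector_derivative c') (at s)"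
  shows "((\<lambda>s. F (c s)) has_vector_derivative frechet_derivative F (at (c s)) c') (at s)"
  using vector_derivative_diff_chain_within[OF assms(2)
          has_derivative_at_withinI[OF smooth_has_derivative[OF assms(1)]]]
  by (simp add: o_def)

lemma has_vector_derivative_smooth_along_line:
  assumes "smooth F"
  shows "((\<lambda>r. F (p + (r - a) *\<^sub>R v)) has_vector_derivative
            frechet_derivative F (at (p + (r - a) *\<^sub>R v)) v) (at r)"
proof (rule has_vector_derivative_smooth_comp[OF assms])
  show "((\<lambda>r. p + (r - a) *\<^sub>R v) has_vector_derivative v) (at r)"
    by (auto intro!: derivative_eq_intros simp: has_vector_derivative_def algebra_simps)
qed

lemma has_vector_derivative_smooth_t:
  "smooth F \<Longrightarrow> ((\<lambda>s. F (s, x, z)) has_vector_derivative frechet_derivative F (at (s, x, z)) (1, 0, 0)) (at s)"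
  using has_vector_derivative_smooth_along_line[of F "(0, x, z)" 0 "(1, 0, 0)" s] by simp

lemma has_vector_derivative_smooth_x:
  "smooth F \<Longrightarrow> ((\<lambda>y. F (t, y, z)) has_vector_derivative frechet_derivative F (at (t, y, z)) (0, 1, 0)) (at y)"
  using has_vector_derivative_smooth_along_line[of F "(t, 0, z)" 0 "(0, 1, 0)" y] by simp

lemma frechet_derivative_linear_in_last:
  fixes F :: "real \<times> real \<times> complex \<Rightarrow> complex"
  assumes "smooth F" "\<And>t x z. F (t, x, z) = F (t, x, 1) * z"
  shows "frechet_derivative F (at (t, x, z)) (a, b, 0) = frechet_derivative F (at (t, x, 1)) (a, b, 0) * z"
proof -
  have line: "F ((t, x, w) + r *\<^sub>R (a, b, 0)) = F ((t, x, 1) + r *\<^sub>R (a, b, 0)) * w" for w r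
    using assms(2)[of "t + r * a" "x + r * b" w] by simp
  have "((\<lambda>r. F ((t, x, z) + (r - 0) *\<^sub>R (a, b, 0))) has_vector_derivative
          frechet_derivative F (at ((t, x, 1) + (0 - 0) *\<^sub>R (a, b, 0))) (a, b, 0) * z) (at 0)"
    unfolding line[of z]
    by (intro has_vector_derivative_mult_left has_vector_derivative_smooth_along_line[OF assms(1)])
  moreover have "((\<lambda>r. F ((t, x, z) + (r - 0) *\<^sub>R (a, b, 0))) has_vector_derivative
          frechet_derivative F (at ((t, x, z) + (0 - 0) *\<^sub>R (a, b, 0))) (a, b, 0)) (at 0)"
    by (rule has_vector_derivative_smooth_along_line[OF assms(1)])
  ultimately show ?thesis by (simp add: vector_derivative_unique_at)
qed

section \<open>Partial derivatives in t and x\<close>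

lemma dT_eq_frechet_derivative:
  assumes "smooth (\<lambda>(t, x). f t x)"
  shows "dT f s x = frechet_derivative (\<lambda>(t, x). f t x) (at (s, x)) (1, 0)"
  using has_vector_derivative_smooth_along_line[OF assms, of "(0, x)" 0 "(1, 0)" s]
  unfolding dT_def by (simp add: vector_derivative_at)

lemma dX_eq_frechet_derivative:
  assumes "smooth (\<lambda>(t, x). f t x)"
  shows "dX f t y = frechet_derivative (\<lambda>(t, x). f t x) (at (t, y)) (0, 1)"
  using has_vector_derivative_smooth_along_line[OF assms, of "(t, 0)" 0 "(0, 1)" y]
  unfolding dX_def by (simp add: vector_derivative_at)

lemma has_vector_derivative_dT:
  assumes "smooth (\<lambda>(t, x). f t x)"
  shows "((\<lambda>s. f s x) has_vector_derivative dT f s x) (at s)"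
  using has_vector_derivative_smooth_along_line[OF assms, of "(0, x)" 0 "(1, 0)" s]
  by (simp add: dT_eq_frechet_derivative[OF assms])

lemma has_vector_derivative_dX:
  assumes "smooth (\<lambda>(t, x). f t x)"
  shows "((\<lambda>y. f t y) has_vector_derivative dX f t y) (at y)"
  using has_vector_derivative_smooth_along_line[OF assms, of "(t, 0)" 0 "(0, 1)" y]
  by (simp add: dX_eq_frechet_derivative[OF assms])

lemma smooth_dT: "smooth (\<lambda>(t, x). f t x) \<Longrightarrow> smooth (\<lambda>(t, x). dT f t x)"
  using smooth_frechet_derivative[of "\<lambda>(t, x). f t x" "(1, 0)"]
  by (simp add: dT_eq_frechet_derivative case_prod_beta')

lemma smooth_dX: "smooth (\<lambda>(t, x). f t x) \<Longrightarrow> smooth (\<lambda>(t, x). dX f t x)"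
  using smooth_frechet_derivative[of "\<lambda>(t, x). f t x" "(0, 1)"]
  by (simp add: dX_eq_frechet_derivative case_prod_beta')

lemma has_real_derivative_Re:
  "(g has_vector_derivative g') F \<Longrightarrow> ((\<lambda>x. Re (g x)) has_real_derivative Re g') F"
  using bounded_linear.has_vector_derivative[OF bounded_linear_Re]
  by (simp add: has_real_derivative_iff_has_vector_derivative)

lemma has_real_derivative_Im:
  "(g has_vector_derivative g') F \<Longrightarrow> ((\<lambda>x. Im (g x)) has_real_derivative Im g') F"
  using bounded_linear.has_vector_derivative[OF bounded_linear_Im]
  by (simp add: has_real_derivative_iff_has_vector_derivative)

lemma second_difference_mean_value:
  fixes f fx fxy :: "real \<Rightarrow> real \<Rightarrow> real"
  assumes fx: "\<And>x y. ((\<lambda>x. f x y) has_real_derivative fx x y) (at x)"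
    and fxy: "\<And>x y. ((\<lambda>y. fx x y) has_real_derivative fxy x y) (at y)"
    and "h > 0"
  obtains u v where "a < u" "u < a + h" "b < v" "v < b + h"
    "f (a + h) (b + h) - f (a + h) b - f a (b + h) + f a b = h * h * fxy u v"
proof -
  have "((\<lambda>x. f x (b + h) - f x b) has_real_derivative fx x (b + h) - fx x b) (at x)" for x
    using fx fx by (rule DERIV_diff)
  then obtain u where u: "a < u" "u < a + h"
    "f (a + h) (b + h) - f (a + h) b - (f a (b + h) - f a b) = h * (fx u (b + h) - fx u b)"
    using MVT2[of a "a + h" "\<lambda>x. f x (b + h) - f x b" "\<lambda>x. fx x (b + h) - fx x b"] \<open>h > 0\<close> by auto
  obtain v where "b < v" "v < b + h" "fx u (b + h) - fx u b = h * fxy u v"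
    using MVT2[of b "b + h" "\<lambda>y. fx u y" "\<lambda>y. fxy u y"] fxy \<open>h > 0\<close> by auto
  with u that show ?thesis by (simp add: algebra_simps)
qed

lemma dist_lt_in_square:
  fixes a b u v h :: real
  assumes "a < u" "u < a + h" "b < v" "v < b + h"
  shows "dist (u, v) (a, b) < 2 * h"
proof -
  have "dist (u, v) (a, b) = sqrt ((u - a)\<^sup>2 + (v - b)\<^sup>2)"
    by (simp add: dist_Pair_Pair dist_real_def)
  also have "\<dots> \<le> \<bar>u - a\<bar> + \<bar>v - b\<bar>" by (rule sqrt_sum_squares_le_sum_abs)
  also have "\<dots> < 2 * h" using assms by simp
  finally show ?thesis .
qed

lemma mixed_partials_eq:
  fixes f fx fy fxy fyx :: "real \<Rightarrow> real \<Rightarrow> real"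
  assumes fx: "\<And>x y. ((\<lambda>x. f x y) has_real_derivative fx x y) (at x)"
    and fy: "\<And>x y. ((\<lambda>y. f x y) has_real_derivative fy x y) (at y)"
    and fxy: "\<And>x y. ((\<lambda>y. fx x y) has_real_derivative fxy x y) (at y)"
    and fyx: "\<And>x y. ((\<lambda>x. fy x y) has_real_derivative fyx x y) (at x)"
    and cont_xy: "isCont (\<lambda>(x, y). fxy x y) (a, b)"
    and cont_yx: "isCont (\<lambda>(x, y). fyx x y) (a, b)"
  shows "fxy a b = fyx a b"
proof (rule ccontr)
  assume "fxy a b \<noteq> fyx a b"
  define d where "d = \<bar>fxy a b - fyx a b\<bar> / 2"
  have "d > 0" using \<open>fxy a b \<noteq> fyx a b\<close> by (simp add: d_def)
  obtain e1 where "e1 > 0" and e1: "\<And>q. dist q (a, b) < e1 \<Longrightarrow> \<bar>case_prod fxy q - fxy a b\<bar> < d"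
    using cont_xy[unfolded continuous_at_eps_delta] \<open>d > 0\<close> by (fastforce simp: dist_real_def)
  obtain e2 where "e2 > 0" and e2: "\<And>q. dist q (a, b) < e2 \<Longrightarrow> \<bar>case_prod fyx q - fyx a b\<bar> < d"
    using cont_yx[unfolded continuous_at_eps_delta] \<open>d > 0\<close> by (fastforce simp: dist_real_def)
  define h where "h = min e1 e2 / 2"
  have "h > 0" "2 * h \<le> e1" "2 * h \<le> e2" using \<open>e1 > 0\<close> \<open>e2 > 0\<close> by (auto simp: h_def)
  obtain u1 v1 where square1: "a < u1" "u1 < a + h" "b < v1" "v1 < b + h"
    and diff1: "f (a + h) (b + h) - f (a + h) b - f a (b + h) + f a b = h * h * fxy u1 v1"
    using second_difference_mean_value[OF fx fxy \<open>h > 0\<close>] .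
  obtain v2 u2 where square2: "b < v2" "v2 < b + h" "a < u2" "u2 < a + h"
    and diff2: "f (a + h) (b + h) - f a (b + h) - f (a + h) b + f a b = h * h * fyx u2 v2"
    using second_difference_mean_value[of "\<lambda>y x. f x y", OF fy fyx \<open>h > 0\<close>] .
  have "h * h * fxy u1 v1 = h * h * fyx u2 v2"
    using diff1 diff2 by linarith
  then have "fxy u1 v1 = fyx u2 v2"
    using \<open>h > 0\<close> by simp
  moreover have "\<bar>fxy u1 v1 - fxy a b\<bar> < d" "\<bar>fyx u2 v2 - fyx a b\<bar> < d"
    using e1[of "(u1, v1)"] e2[of "(u2, v2)"] dist_lt_in_square[OF square1] dist_lt_in_square[of a u2 h b v2]
      square2 \<open>2 * h \<le> e1\<close> \<open>2 * h \<le> e2\<close>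
    by auto
  ultimately show False using d_def by (auto simp: abs_less_iff abs_if split: if_splits)
qed

lemma dX_dT_commute:
  assumes f: "smooth (\<lambda>(t, x). f t x)"
  shows "dX (dT f) t x = dT (dX f) t x"
proof -
  have fT: "smooth (\<lambda>(t, x). dT f t x)" and fX: "smooth (\<lambda>(t, x). dX f t x)"
    using smooth_dT[OF f] smooth_dX[OF f] .
  have fXT: "isCont (\<lambda>(t, x). dX (dT f) t x) p" and fTX: "isCont (\<lambda>(t, x). dT (dX f) t x) p" for p
    using smooth_isCont[OF smooth_dX[OF fT]] smooth_isCont[OF smooth_dT[OF fX]] by blast+
  have Re_Im_cont: "isCont (\<lambda>(t, x). Re (g t x)) p" "isCont (\<lambda>(t, x). Im (g t x)) p"
    if "isCont (\<lambda>(t, x). g t x) p" for g :: "real \<Rightarrow> real \<Rightarrow> complex" and p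
    using continuous_Re[OF that] continuous_Im[OF that] by (simp_all add: case_prod_beta')
  have "Re (dX (dT f) t x) = Re (dT (dX f) t x)"
    by (rule mixed_partials_eq[where f = "\<lambda>t x. Re (f t x)"
          and fx = "\<lambda>t x. Re (dT f t x)" and fy = "\<lambda>t x. Re (dX f t x)"
          and fxy = "\<lambda>t x. Re (dX (dT f) t x)" and fyx = "\<lambda>t x. Re (dT (dX f) t x)"])
       (intro has_real_derivative_Re has_vector_derivative_dT has_vector_derivative_dX f fT fX
          Re_Im_cont fXT fTX)+
  moreover have "Im (dX (dT f) t x) = Im (dT (dX f) t x)"
    by (rule mixed_partials_eq[where f = "\<lambda>t x. Im (f t x)"
          and fx = "\<lambda>t x. Im (dT f t x)" and fy = "\<lambda>t x. Im (dX f t x)"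
          and fxy = "\<lambda>t x. Im (dX (dT f) t x)" and fyx = "\<lambda>t x. Im (dT (dX f) t x)"])
       (intro has_real_derivative_Im has_vector_derivative_dT has_vector_derivative_dX f fT fX
          Re_Im_cont fXT fTX)+
  ultimately show ?thesis by (simp add: complex_eq_iff)
qed

lemma dT_linear_combination:
  assumes "smooth (\<lambda>(t, x). f t x)" "smooth (\<lambda>(t, x). g t x)"
  shows "dT (\<lambda>s y. a * f s y + b * g s y) = (\<lambda>s y. a * dT f s y + b * dT g s y)"
  unfolding dT_def[of "\<lambda>s y. a * f s y + b * g s y"]
  by (intro ext vector_derivative_at has_vector_derivative_add has_vector_derivative_mult_right
        has_vector_derivative_dT assms)

lemma dX_linear_combination:
  assumes "smooth (\<lambda>(t, x). f t x)" "smooth (\<lambda>(t, x). g t x)"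
  shows "dX (\<lambda>s y. a * f s y + b * g s y) = (\<lambda>s y. a * dX f s y + b * dX g s y)"
  unfolding dX_def[of "\<lambda>s y. a * f s y + b * g s y"]
  by (intro ext vector_derivative_at has_vector_derivative_add has_vector_derivative_mult_right
        has_vector_derivative_dX assms)

section \<open>The nonlinearity\<close>

lemma has_real_derivative_norm_along_line_through_1:
  "((\<lambda>s. cmod (1 + complex_of_real s * w)) has_real_derivative Re w) (at 0)"
proof -
  have "(norm has_derivative (\<lambda>h. h \<bullet> sgn (1::complex))) (at (1 + complex_of_real 0 * w))"
    using has_derivative_norm[of "1::complex"] by simp
  from vector_derivative_diff_chain_within[OF has_vector_derivative_complex_line
         has_derivative_at_withinI[OF this]]
  show ?thesis
    by (simp add: o_def has_real_derivative_iff_has_vector_derivative)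
qed

lemma dNL_mult: "dNL \<gamma> z (w * z) = (w + complex_of_real (\<gamma> * Re w)) * NL \<gamma> z"
proof -
  define r where "r = (\<lambda>s. cmod (1 + complex_of_real s * w) powr \<gamma>)"
  have NL_line: "NL \<gamma> (z + complex_of_real s * (w * z))
                   = complex_of_real (r s) * ((1 + complex_of_real s * w) * NL \<gamma> z)" for s
  proof -
    have "z + complex_of_real s * (w * z) = (1 + complex_of_real s * w) * z"
      by (simp add: algebra_simps)
    then show ?thesis by (simp add: NL_def r_def norm_mult powr_mult)
  qed
  have "((\<lambda>u. u powr \<gamma>) has_real_derivative \<gamma>) (at (cmod (1 + complex_of_real 0 * w)))"
    using has_real_derivative_powr[of 1 \<gamma>] by simp
  from DERIV_chain2[OF this has_real_derivative_norm_along_line_through_1]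
  have "(r has_real_derivative \<gamma> * Re w) (at 0)"
    by (simp add: r_def)
  then have "((\<lambda>s. complex_of_real (r s) * ((1 + complex_of_real s * w) * NL \<gamma> z)) has_vector_derivative
               complex_of_real (r 0) * (w * NL \<gamma> z)
               + complex_of_real (\<gamma> * Re w) * ((1 + complex_of_real 0 * w) * NL \<gamma> z)) (at 0)"
    by (intro has_vector_derivative_mult has_vector_derivative_of_real
          has_vector_derivative_mult_left has_vector_derivative_complex_line)
  then show ?thesis
    unfolding dNL_def NL_line by (simp add: vector_derivative_at r_def algebra_simps)
qed

section \<open>Time translations and phase rotations\<close>

text \<open>Since Q acts along psi as a(i psi) - b psi_t, its prolongation applied to the equation
  is i a times the equation.\<close>

lemma lie_sym_time_translation_phase_rotation:
  "lie_sym \<gamma> V (\<lambda>t x z. b) (\<lambda>t x z. 0) (\<lambda>t x z. \<i> * complex_of_real a * z)"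
  unfolding lie_sym_def
proof (intro conjI allI impI)
  show "smooth (\<lambda>(t::real, x::real, z::complex). b)" "smooth (\<lambda>(t::real, x::real, z::complex). 0::real)"
    using smooth_const by (simp_all add: case_prod_beta')
  show "smooth (\<lambda>(t::real, x::real, z::complex). \<i> * complex_of_real a * z)"
    using smooth_mult[OF smooth_const smooth_last_component] by (simp add: case_prod_beta')
next
  fix \<psi> :: "real \<Rightarrow> real \<Rightarrow> complex" and t x
  assume "smooth (\<lambda>(t, x). \<psi> t x) \<and> \<psi> t x \<noteq> 0 \<and> Delta \<gamma> V \<psi> t x = 0"
  then have \<psi>: "smooth (\<lambda>(t, x). \<psi> t x)" and eq: "Delta \<gamma> V \<psi> t x = 0" by auto
  have \<psi>T: "smooth (\<lambda>(t, x). dT \<psi> t x)" and \<psi>X: "smooth (\<lambda>(t, x). dX \<psi> t x)"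
    using smooth_dT[OF \<psi>] smooth_dX[OF \<psi>] .
  define c where "c = \<i> * complex_of_real a"
  have char: "charQ (\<lambda>t x z. b) (\<lambda>t x z. 0) (\<lambda>t x z. \<i> * complex_of_real a * z) \<psi>
                = (\<lambda>s y. c * \<psi> s y + (- complex_of_real b) * dT \<psi> s y)"
    by (simp add: fun_eq_iff charQ_def c_def)
  have "eta_t (\<lambda>t x z. b) (\<lambda>t x z. 0) (\<lambda>t x z. \<i> * complex_of_real a * z) \<psi> t x = c * dT \<psi> t x"
    unfolding eta_t_def char dT_linear_combination[OF \<psi> \<psi>T] by simp
  moreover have "dX (dX (dT \<psi>)) t x = dT (dX (dX \<psi>)) t x"
    using dX_dT_commute[OF \<psi>] dX_dT_commute[OF \<psi>X] by (metis ext)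
  then have "eta_xx (\<lambda>t x z. b) (\<lambda>t x z. 0) (\<lambda>t x z. \<i> * complex_of_real a * z) \<psi> t x
               = c * dX (dX \<psi>) t x"
    unfolding eta_xx_def char dX_linear_combination[OF \<psi> \<psi>T]
      dX_linear_combination[OF \<psi>X smooth_dX[OF \<psi>T]] by simp
  moreover have "dNL \<gamma> (\<psi> t x) (\<i> * complex_of_real a * \<psi> t x) = c * NL \<gamma> (\<psi> t x)"
    using dNL_mult[of \<gamma> "\<psi> t x" "\<i> * complex_of_real a"] by (simp add: c_def)
  ultimately have "prQDelta \<gamma> V (\<lambda>t x z. b) (\<lambda>t x z. 0) (\<lambda>t x z. \<i> * complex_of_real a * z) \<psi> t x
                     = c * Delta \<gamma> V \<psi> t x"
    unfolding prQDelta_def Delta_def by (simp only:) (simp add: c_def algebra_simps)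
  with eq show "prQDelta \<gamma> V (\<lambda>t x z. b) (\<lambda>t x z. 0) (\<lambda>t x z. \<i> * complex_of_real a * z) \<psi> t x = 0"
    by simp
qed

section \<open>Bilinear test jets\<close>

definition bilinear_jet :: "complex \<Rightarrow> complex \<Rightarrow> complex \<Rightarrow> complex \<Rightarrow> real \<Rightarrow> real \<Rightarrow> real \<Rightarrow> real \<Rightarrow> complex"
  where "bilinear_jet z \<alpha> \<beta> \<mu> t x s y =
    z + \<alpha> * complex_of_real (s - t) + \<beta> * complex_of_real (y - x)
      + \<mu> * (complex_of_real (s - t) * complex_of_real (y - x))"

lemma bilinear_jet_center [simp]: "bilinear_jet z \<alpha> \<beta> \<mu> t x t x = z"
  by (simp add: bilinear_jet_def)

lemma smooth_bilinear_jet: "smooth (\<lambda>(s, y). bilinear_jet z \<alpha> \<beta> \<mu> t x s y)"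
proof -
  have affine: "smooth (\<lambda>q. complex_of_real (L q - c))" if "bounded_linear L" for L :: "real \<times> real \<Rightarrow> real" and c
    using smooth_add[OF smooth_bounded_linear[OF bounded_linear_compose[OF bounded_linear_of_real that]]
                        smooth_const[of "- complex_of_real c"]]
    by (simp add: o_def)
  have "smooth (\<lambda>q. z + \<alpha> * complex_of_real (fst q - t) + \<beta> * complex_of_real (snd q - x)
                     + \<mu> * (complex_of_real (fst q - t) * complex_of_real (snd q - x)))"
    by (intro smooth_add smooth_mult smooth_const affine bounded_linear_fst bounded_linear_snd)
  then show ?thesis by (simp add: bilinear_jet_def case_prod_beta')
qed

lemma dT_indep_t [simp]: "dT (\<lambda>s y. f y) = (\<lambda>s y. 0)"
  by (simp add: fun_eq_iff dT_def)

lemma dX_indep_x [simp]: "dX (\<lambda>s y. f s) = (\<lambda>s y. 0)"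
  by (simp add: fun_eq_iff dX_def)

lemma dT_bilinear_jet: "dT (bilinear_jet z \<alpha> \<beta> \<mu> t x) = (\<lambda>s y. \<alpha> + \<mu> * complex_of_real (y - x))"
  unfolding dT_def bilinear_jet_def
  by (intro ext vector_derivative_at)
     (auto intro!: derivative_eq_intros simp: has_vector_derivative_def scaleR_conv_of_real algebra_simps)

lemma dX_bilinear_jet: "dX (bilinear_jet z \<alpha> \<beta> \<mu> t x) = (\<lambda>s y. \<beta> + \<mu> * complex_of_real (s - t))"
  unfolding dX_def bilinear_jet_def
  by (intro ext vector_derivative_at)
     (auto intro!: derivative_eq_intros simp: has_vector_derivative_def scaleR_conv_of_real algebra_simps)

lemma Delta_bilinear_jet:
  "Delta \<gamma> V (bilinear_jet z \<alpha> \<beta> \<mu> t x) t x = \<i> * \<alpha> + NL \<gamma> z + V x * z"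
  by (simp add: Delta_def dT_bilinear_jet dX_bilinear_jet)

lemma bilinear_jet_t_line:
  "(s, x, bilinear_jet z \<alpha> \<beta> \<mu> t x s x) = (t, x, z) + (s - t) *\<^sub>R (1, 0, \<alpha>)"
  by (simp add: bilinear_jet_def scaleR_conv_of_real mult.commute)

lemma bilinear_jet_x_line:
  "(t, y, bilinear_jet z \<alpha> \<beta> \<mu> t x t y) = (t, x, z) + (y - x) *\<^sub>R (0, 1, \<beta>)"
  by (simp add: bilinear_jet_def scaleR_conv_of_real mult.commute)

lemma eta_t_bilinear_jet:
  assumes \<tau>: "smooth (\<lambda>(t, x, z). \<tau> t x z)" and \<eta>: "smooth (\<lambda>(t, x, z). \<eta> t x z)"
  shows "eta_t \<tau> (\<lambda>t x z. 0) \<eta> (bilinear_jet z \<alpha> \<beta> \<mu> t x) t x =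
           frechet_derivative (\<lambda>(t, x, z). \<eta> t x z) (at (t, x, z)) (1, 0, \<alpha>)
           - complex_of_real (frechet_derivative (\<lambda>(t, x, z). \<tau> t x z) (at (t, x, z)) (1, 0, \<alpha>)) * \<alpha>"
proof -
  let ?E = "\<lambda>(t, x, z). \<eta> t x z" and ?T = "\<lambda>(t, x, z). \<tau> t x z"
  have char: "charQ \<tau> (\<lambda>t x z. 0) \<eta> (bilinear_jet z \<alpha> \<beta> \<mu> t x) s x
      = ?E ((t, x, z) + (s - t) *\<^sub>R (1, 0, \<alpha>))
        - complex_of_real (?T ((t, x, z) + (s - t) *\<^sub>R (1, 0, \<alpha>))) * \<alpha>" for s
    unfolding bilinear_jet_t_line[of s x z \<alpha> \<beta> \<mu> t, symmetric] by (simp add: charQ_def dT_bilinear_jet)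
  have "((\<lambda>s. charQ \<tau> (\<lambda>t x z. 0) \<eta> (bilinear_jet z \<alpha> \<beta> \<mu> t x) s x) has_vector_derivative
          frechet_derivative ?E (at ((t, x, z) + (t - t) *\<^sub>R (1, 0, \<alpha>))) (1, 0, \<alpha>)
          - complex_of_real (frechet_derivative ?T (at ((t, x, z) + (t - t) *\<^sub>R (1, 0, \<alpha>))) (1, 0, \<alpha>)) * \<alpha>)
        (at t)"
    unfolding char
    by (intro has_vector_derivative_diff has_vector_derivative_mult_left
          has_vector_derivative_complex_of_real has_vector_derivative_smooth_along_line \<tau> \<eta>)
  then show ?thesis
    by (simp add: eta_t_def dT_def[of "charQ _ _ _ _"] dT_bilinear_jet vector_derivative_at)
qed

lemma dX_charQ_bilinear_jet:
  assumes \<tau>: "smooth (\<lambda>(t, x, z). \<tau> t x z)" and \<eta>: "smooth (\<lambda>(t, x, z). \<eta> t x z)"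
  shows "dX (charQ \<tau> (\<lambda>t x z. 0) \<eta> (bilinear_jet z \<alpha> \<beta> \<mu> t x)) t y =
           frechet_derivative (\<lambda>(t, x, z). \<eta> t x z) (at ((t, x, z) + (y - x) *\<^sub>R (0, 1, \<beta>))) (0, 1, \<beta>)
           - (complex_of_real ((\<lambda>(t, x, z). \<tau> t x z) ((t, x, z) + (y - x) *\<^sub>R (0, 1, \<beta>))) * \<mu>
              + complex_of_real (frechet_derivative (\<lambda>(t, x, z). \<tau> t x z) (at ((t, x, z) + (y - x) *\<^sub>R (0, 1, \<beta>))) (0, 1, \<beta>))
                * (\<alpha> + \<mu> * complex_of_real (y - x)))"
proof -
  let ?E = "\<lambda>(t, x, z). \<eta> t x z" and ?T = "\<lambda>(t, x, z). \<tau> t x z"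
  let ?q = "\<lambda>y. (t, x, z) + (y - x) *\<^sub>R (0, 1, \<beta>)"
  have "charQ \<tau> (\<lambda>t x z. 0) \<eta> (bilinear_jet z \<alpha> \<beta> \<mu> t x) t r
      = ?E (?q r) - complex_of_real (?T (?q r)) * (\<alpha> + \<mu> * complex_of_real (r - x))" for r
    unfolding bilinear_jet_x_line[of t r z \<alpha> \<beta> \<mu> x, symmetric] by (simp add: charQ_def dT_bilinear_jet)
  then have "((\<lambda>r. charQ \<tau> (\<lambda>t x z. 0) \<eta> (bilinear_jet z \<alpha> \<beta> \<mu> t x) t r) has_vector_derivative
          frechet_derivative ?E (at (?q y)) (0, 1, \<beta>)
          - (complex_of_real (?T (?q y)) * \<mu>
             + complex_of_real (frechet_derivative ?T (at (?q y)) (0, 1, \<beta>))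
               * (\<alpha> + \<mu> * complex_of_real (y - x)))) (at y)"
    by (simp only:) (intro has_vector_derivative_diff has_vector_derivative_mult
          has_vector_derivative_complex_of_real has_vector_derivative_smooth_along_line \<tau> \<eta> has_vector_derivative_shifted_line)
  then show ?thesis
    unfolding dX_def by (rule vector_derivative_at)
qed

lemma eta_xx_bilinear_jet:
  assumes \<tau>: "smooth (\<lambda>(t, x, z). \<tau> t x z)" and \<eta>: "smooth (\<lambda>(t, x, z). \<eta> t x z)"
  shows "eta_xx \<tau> (\<lambda>t x z. 0) \<eta> (bilinear_jet z \<alpha> \<beta> \<mu> t x) t x =
           frechet_derivative (\<lambda>q. frechet_derivative (\<lambda>(t, x, z). \<eta> t x z) (at q) (0, 1, \<beta>)) (at (t, x, z)) (0, 1, \<beta>)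
           - complex_of_real (frechet_derivative (\<lambda>q. frechet_derivative (\<lambda>(t, x, z). \<tau> t x z) (at q) (0, 1, \<beta>))
                                (at (t, x, z)) (0, 1, \<beta>)) * \<alpha>
           - 2 * complex_of_real (frechet_derivative (\<lambda>(t, x, z). \<tau> t x z) (at (t, x, z)) (0, 1, \<beta>)) * \<mu>"
proof -
  let ?E = "\<lambda>(t, x, z). \<eta> t x z" and ?T = "\<lambda>(t, x, z). \<tau> t x z"
  let ?E' = "\<lambda>q. frechet_derivative ?E (at q) (0, 1, \<beta>)" and ?T' = "\<lambda>q. frechet_derivative ?T (at q) (0, 1, \<beta>)"
  let ?q = "\<lambda>y. (t, x, z) + (y - x) *\<^sub>R (0, 1, \<beta>)"
  have first: "dX (charQ \<tau> (\<lambda>t x z. 0) \<eta> (bilinear_jet z \<alpha> \<beta> \<mu> t x)) t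
      = (\<lambda>y. ?E' (?q y) - (complex_of_real (?T (?q y)) * \<mu>
                             + complex_of_real (?T' (?q y)) * (\<alpha> + \<mu> * complex_of_real (y - x))))"
    using dX_charQ_bilinear_jet[OF \<tau> \<eta>] by (intro ext)
  have "((\<lambda>y. ?E' (?q y) - (complex_of_real (?T (?q y)) * \<mu>
                             + complex_of_real (?T' (?q y)) * (\<alpha> + \<mu> * complex_of_real (y - x))))
         has_vector_derivative
          frechet_derivative ?E' (at (?q x)) (0, 1, \<beta>)
          - (complex_of_real (?T' (?q x)) * \<mu>
             + (complex_of_real (?T' (?q x)) * \<mu>
                + complex_of_real (frechet_derivative ?T' (at (?q x)) (0, 1, \<beta>)) * (\<alpha> + \<mu> * complex_of_real (x - x))))) (at x)"
    by (intro has_vector_derivative_diff has_vector_derivative_add has_vector_derivative_mult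
          has_vector_derivative_mult_left has_vector_derivative_complex_of_real
          has_vector_derivative_smooth_along_line smooth_frechet_derivative \<tau> \<eta>
          has_vector_derivative_shifted_line)
  then show ?thesis
    by (simp add: eta_xx_def dX_def[of "dX _"] first dX_bilinear_jet vector_derivative_at algebra_simps)
qed

section \<open>Symmetries common to all potentials\<close>

locale common_symmetry =
  fixes \<gamma> :: real and \<tau> \<xi> :: "real \<Rightarrow> real \<Rightarrow> complex \<Rightarrow> real" and \<eta> :: "real \<Rightarrow> real \<Rightarrow> complex \<Rightarrow> complex"
  assumes gamma_nonzero: "\<gamma> \<noteq> 0"
    and lie_sym_every_potential: "\<And>V. smooth V \<Longrightarrow> lie_sym \<gamma> V \<tau> \<xi> \<eta>"
begin

abbreviation Tau :: "real \<times> real \<times> complex \<Rightarrow> real" where "Tau \<equiv> \<lambda>(t, x, z). \<tau> t x z"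

abbreviation Eta :: "real \<times> real \<times> complex \<Rightarrow> complex" where "Eta \<equiv> \<lambda>(t, x, z). \<eta> t x z"

lemma smooth_Tau: "smooth Tau" and smooth_Xi: "smooth (\<lambda>(t, x, z). \<xi> t x z)" and smooth_Eta: "smooth Eta"
  using lie_sym_every_potential[OF smooth_const[of 0]] unfolding lie_sym_def by blast+

lemma invariance:
  assumes "smooth V" "smooth (\<lambda>(s, y). \<psi> s y)" "\<psi> t x \<noteq> 0" "Delta \<gamma> V \<psi> t x = 0"
  shows "prQDelta \<gamma> V \<tau> \<xi> \<eta> \<psi> t x = 0"
  using lie_sym_every_potential[OF assms(1)] assms(2-4) unfolding lie_sym_def by blast

text \<open>Along a constant psi = z, two potentials with the same value at x but slopes 0 and 1
  differ in the invariance condition exactly by xi z.\<close>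

lemma xi_eq_0_off_zero:
  assumes "z \<noteq> 0"
  shows "\<xi> t x z = 0"
proof -
  define c where "c = - NL \<gamma> z / z"
  define V where "V = (\<lambda>y. c + 1 * complex_of_real (y - x))"
  have "smooth V"
    using smooth_add[OF smooth_const smooth_bounded_linear[OF bounded_linear_of_real], of "c - complex_of_real x"]
    by (simp add: V_def algebra_simps)
  have V': "vector_derivative V (at x) = 1"
    unfolding V_def by (rule vector_derivative_at[OF has_vector_derivative_shifted_line])
  let ?\<psi> = "bilinear_jet z 0 0 0 t x"
  have "Delta \<gamma> V' ?\<psi> t x = 0" if "V' x = c" for V'
    using that assms by (simp add: Delta_bilinear_jet c_def)
  then have "prQDelta \<gamma> V \<tau> \<xi> \<eta> ?\<psi> t x = 0" "prQDelta \<gamma> (\<lambda>y. c) \<tau> \<xi> \<eta> ?\<psi> t x = 0"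
    using invariance[OF \<open>smooth V\<close> smooth_bilinear_jet] invariance[OF smooth_const smooth_bilinear_jet] assms
    by (simp_all add: V_def)
  moreover have "prQDelta \<gamma> V \<tau> \<xi> \<eta> ?\<psi> t x - prQDelta \<gamma> (\<lambda>y. c) \<tau> \<xi> \<eta> ?\<psi> t x
                   = complex_of_real (\<xi> t x z) * z"
    by (simp add: prQDelta_def V' V_def)
  ultimately show ?thesis using assms by simp
qed

lemma xi_eq_0: "\<xi> = (\<lambda>t x z. 0)"
proof (intro ext)
  fix t x z
  show "\<xi> t x z = 0"
    using smooth_section_eq_at_0[OF smooth_Xi continuous_const] xi_eq_0_off_zero
    by (cases "z = 0") auto
qed

lemma determining_equation:
  assumes "z \<noteq> 0"
  shows "\<i> * (frechet_derivative Eta (at (t, x, z)) (1, 0, \<alpha>)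
              - complex_of_real (frechet_derivative Tau (at (t, x, z)) (1, 0, \<alpha>)) * \<alpha>)
         + frechet_derivative (\<lambda>q. frechet_derivative Eta (at q) (0, 1, \<beta>)) (at (t, x, z)) (0, 1, \<beta>)
         - complex_of_real (frechet_derivative (\<lambda>q. frechet_derivative Tau (at q) (0, 1, \<beta>))
                              (at (t, x, z)) (0, 1, \<beta>)) * \<alpha>
         - 2 * complex_of_real (frechet_derivative Tau (at (t, x, z)) (0, 1, \<beta>)) * \<mu>
         + dNL \<gamma> z (\<eta> t x z)
         = (\<i> * \<alpha> + NL \<gamma> z) / z * \<eta> t x z"
proof -
  define c where "c = - (\<i> * \<alpha> + NL \<gamma> z) / z"
  have "Delta \<gamma> (\<lambda>y. c) (bilinear_jet z \<alpha> \<beta> \<mu> t x) t x = 0"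
    using assms by (simp add: Delta_bilinear_jet c_def)
  then have "prQDelta \<gamma> (\<lambda>y. c) \<tau> \<xi> \<eta> (bilinear_jet z \<alpha> \<beta> \<mu> t x) t x = 0"
    using invariance[OF smooth_const smooth_bilinear_jet] assms by simp
  then show ?thesis
    using assms
    by (simp add: prQDelta_def xi_eq_0 eta_t_bilinear_jet[OF smooth_Tau smooth_Eta]
          eta_xx_bilinear_jet[OF smooth_Tau smooth_Eta] c_def field_simps)
qed

lemma determining_equation_const:
  assumes "z \<noteq> 0"
  shows "\<i> * frechet_derivative Eta (at (t, x, z)) (1, 0, 0)
         + frechet_derivative (\<lambda>q. frechet_derivative Eta (at q) (0, 1, 0)) (at (t, x, z)) (0, 1, 0)
         + dNL \<gamma> z (\<eta> t x z) = NL \<gamma> z / z * \<eta> t x z"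
  using determining_equation[OF assms, where t = t and x = x and \<alpha> = 0 and \<beta> = 0 and \<mu> = 0] by simp

lemma Tau_x_eq_0:
  assumes "z \<noteq> 0"
  shows "frechet_derivative Tau (at (t, x, z)) (0, 1, 0) = 0"
  using arg_cong2[where f = minus, OF determining_equation[OF assms, where t = t and x = x and \<alpha> = 0 and \<beta> = 0 and \<mu> = 1]
                                     determining_equation_const[OF assms, of t x]]
  by simp

lemma Tau_xx_eq_0:
  assumes "z \<noteq> 0"
  shows "frechet_derivative (\<lambda>q. frechet_derivative Tau (at q) (0, 1, 0)) (at (t, x, z)) (0, 1, 0) = 0"
proof -
  have "((\<lambda>y. frechet_derivative Tau (at (t, y, z)) (0, 1, 0)) has_vector_derivative
          frechet_derivative (\<lambda>q. frechet_derivative Tau (at q) (0, 1, 0)) (at (t, x, z)) (0, 1, 0)) (at x)"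
    by (rule has_vector_derivative_smooth_x[OF smooth_frechet_derivative[OF smooth_Tau]])
  moreover have "((\<lambda>y. frechet_derivative Tau (at (t, y, z)) (0, 1, 0)) has_vector_derivative 0) (at x)"
    using Tau_x_eq_0[OF assms] by simp
  ultimately show ?thesis by (rule vector_derivative_unique_at)
qed

lemma Eta_z_via_Tau:
  assumes "z \<noteq> 0"
  shows "frechet_derivative Eta (at (t, x, z)) (0, 0, a)
         = complex_of_real (frechet_derivative Tau (at (t, x, z)) (1, 0, 0)
                            + frechet_derivative Tau (at (t, x, z)) (0, 0, a)) * a + a * \<eta> t x z / z"
proof -
  have "frechet_derivative Eta (at (t, x, z)) (1, 0, a)
               = frechet_derivative Eta (at (t, x, z)) (1, 0, 0) + frechet_derivative Eta (at (t, x, z)) (0, 0, a)"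
    "frechet_derivative Tau (at (t, x, z)) (1, 0, a)
               = frechet_derivative Tau (at (t, x, z)) (1, 0, 0) + frechet_derivative Tau (at (t, x, z)) (0, 0, a)"
    using frechet_derivative_smooth_add[OF smooth_Eta, of "(t, x, z)" "(1, 0, 0)" "(0, 0, a)"]
      frechet_derivative_smooth_add[OF smooth_Tau, of "(t, x, z)" "(1, 0, 0)" "(0, 0, a)"]
    by simp_all
  then have "\<i> * (frechet_derivative Eta (at (t, x, z)) (0, 0, a)
                 - (complex_of_real (frechet_derivative Tau (at (t, x, z)) (1, 0, 0)
                                     + frechet_derivative Tau (at (t, x, z)) (0, 0, a)) * a
                    + a * \<eta> t x z / z)) = 0"
    using arg_cong2[where f = minus,
        OF determining_equation[OF assms, where t = t and x = x and \<alpha> = a and \<beta> = 0 and \<mu> = 0]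
           determining_equation_const[OF assms, of t x]]
      Tau_xx_eq_0[OF assms, of t x]
    by (simp add: algebra_simps add_divide_distrib)
  then show ?thesis by simp
qed

text \<open>In the relation of Eta_z_via_Tau, the term quadratic in a is even in a and all others are
  odd, so it vanishes.\<close>

lemma Tau_z_eq_0:
  assumes "z \<noteq> 0"
  shows "frechet_derivative Tau (at (t, x, z)) (0, 0, a) = 0"
proof (cases "a = 0")
  case True
  then show ?thesis
    using frechet_derivative_smooth_scaleR[OF smooth_Tau, of _ 0] by (simp add: zero_prod_def)
next
  case False
  have "frechet_derivative Eta (at (t, x, z)) (0, 0, - a) = - frechet_derivative Eta (at (t, x, z)) (0, 0, a)"
    "frechet_derivative Tau (at (t, x, z)) (0, 0, - a) = - frechet_derivative Tau (at (t, x, z)) (0, 0, a)"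
    using frechet_derivative_smooth_minus[OF smooth_Eta, of "(t, x, z)" "(0, 0, a)"]
      frechet_derivative_smooth_minus[OF smooth_Tau, of "(t, x, z)" "(0, 0, a)"]
    by simp_all
  then have "2 * complex_of_real (frechet_derivative Tau (at (t, x, z)) (0, 0, a)) * a = 0"
    using Eta_z_via_Tau[OF assms, of t x a] Eta_z_via_Tau[OF assms, of t x "- a"] by (simp add: algebra_simps)
  with False show ?thesis by simp
qed

lemma Tau_xz_eq_0:
  assumes "z \<noteq> 0"
  shows "frechet_derivative Tau (at (t, x, z)) (0, h, w) = 0"
proof -
  have "frechet_derivative Tau (at (t, x, z)) (0, h, w)
          = frechet_derivative Tau (at (t, x, z)) (h *\<^sub>R (0, 1, 0) + (0, 0, w))"
    by simp
  also have "\<dots> = h *\<^sub>R frechet_derivative Tau (at (t, x, z)) (0, 1, 0) + frechet_derivative Tau (at (t, x, z)) (0, 0, w)"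
    by (simp only: frechet_derivative_smooth_add[OF smooth_Tau] frechet_derivative_smooth_scaleR[OF smooth_Tau])
  finally show ?thesis using Tau_x_eq_0[OF assms] Tau_z_eq_0[OF assms] by simp
qed

lemma tau_eq_off_zero:
  assumes "z \<noteq> 0"
  shows "\<tau> t x z = \<tau> t 0 1"
proof -
  define S where "S = (UNIV :: real set) \<times> - {0 :: complex}"
  define f where "f = (\<lambda>q. \<tau> t (fst q) (snd q))"
  have "open S" unfolding S_def by (intro open_Times open_UNIV open_Compl closed_singleton)
  moreover have "connected S"
    unfolding S_def by (rule connected_Times[OF connected_UNIV connected_punctured_universe]) simp
  moreover have "(f has_derivative (\<lambda>h. 0)) (at q)" if "q \<in> S" for q
  proof -
    have "((\<lambda>q :: real \<times> complex. (t, fst q, snd q)) has_derivative (\<lambda>h. (0, fst h, snd h))) (at q)"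
      by (auto intro!: derivative_eq_intros)
    from has_derivative_compose[OF this smooth_has_derivative[OF smooth_Tau]]
    have "(f has_derivative (\<lambda>h. frechet_derivative Tau (at (t, fst q, snd q)) (0, fst h, snd h))) (at q)"
      unfolding f_def by (simp only: prod.case)
    moreover have "(\<lambda>h. frechet_derivative Tau (at (t, fst q, snd q)) (0, fst h, snd h)) = (\<lambda>h. 0)"
      using that by (intro ext Tau_xz_eq_0) (auto simp: S_def mem_Times_iff)
    ultimately show ?thesis by simp
  qed
  ultimately have "f (x, z) = f (0, 1)"
    by (rule has_derivative_zero_unique_connected) (auto simp: S_def assms)
  then show ?thesis by (simp add: f_def)
qed

lemma Tau_t_eq:
  assumes "z \<noteq> 0"
  shows "frechet_derivative Tau (at (t, x, z)) (1, 0, 0) = frechet_derivative Tau (at (t, 0, 1)) (1, 0, 0)"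
proof -
  have "((\<lambda>s. \<tau> s x z) has_vector_derivative frechet_derivative Tau (at (t, 0, 1)) (1, 0, 0)) (at t)"
    using has_vector_derivative_smooth_t[OF smooth_Tau, of 0 1 t] tau_eq_off_zero[OF assms] by simp
  moreover have "((\<lambda>s. \<tau> s x z) has_vector_derivative frechet_derivative Tau (at (t, x, z)) (1, 0, 0)) (at t)"
    using has_vector_derivative_smooth_t[OF smooth_Tau, of x z t] by simp
  ultimately show ?thesis by (metis vector_derivative_unique_at)
qed

lemma has_vector_derivative_eta_on_circle:
  "((\<lambda>\<theta>. \<eta> t 0 (cis \<theta>) * cis (- \<theta>)) has_vector_derivative
      \<i> * complex_of_real (frechet_derivative Tau (at (t, 0, 1)) (1, 0, 0))) (at \<theta>)"
proof -
  define c where "c = frechet_derivative Tau (at (t, 0, 1)) (1, 0, 0)"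
  have cis_pos: "((\<lambda>\<theta>. cis \<theta>) has_vector_derivative \<i> * cis \<theta>) (at \<theta>)"
    and cis_neg: "((\<lambda>\<theta>. cis (- \<theta>)) has_vector_derivative - (\<i> * cis (- \<theta>))) (at \<theta>)"
    using has_vector_derivative_cis[of 1 \<theta>] has_vector_derivative_cis[of "- 1" \<theta>] by simp_all
  have "((\<lambda>\<theta>. (t, 0, cis \<theta>)) has_vector_derivative (0, 0, \<i> * cis \<theta>)) (at \<theta>)"
    by (intro has_vector_derivative_Pair has_vector_derivative_const cis_pos)
  from has_vector_derivative_mult[OF has_vector_derivative_smooth_comp[OF smooth_Eta this] cis_neg]
  have "((\<lambda>\<theta>. \<eta> t 0 (cis \<theta>) * cis (- \<theta>)) has_vector_derivative \<eta> t 0 (cis \<theta>) * - (\<i> * cis (- \<theta>))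
          + frechet_derivative Eta (at (t, 0, cis \<theta>)) (0, 0, \<i> * cis \<theta>) * cis (- \<theta>)) (at \<theta>)"
    by simp
  moreover have "frechet_derivative Eta (at (t, 0, cis \<theta>)) (0, 0, \<i> * cis \<theta>)
                   = (complex_of_real c + \<eta> t 0 (cis \<theta>) / cis \<theta>) * (\<i> * cis \<theta>)"
    using Eta_z_via_Tau[of "cis \<theta>" t 0 "\<i> * cis \<theta>"] Tau_z_eq_0[of "cis \<theta>" t 0 "\<i> * cis \<theta>"]
      Tau_t_eq[of "cis \<theta>" t 0]
    by (simp add: c_def algebra_simps)
  moreover have "(complex_of_real c + \<eta> t 0 (cis \<theta>) / cis \<theta>) * (\<i> * cis \<theta>) * cis (- \<theta>)
                   = \<i> * complex_of_real c * (cis \<theta> * cis (- \<theta>)) + \<i> * \<eta> t 0 (cis \<theta>) * cis (- \<theta>)"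
    by (simp add: field_simps)
  moreover have "cis \<theta> * cis (- \<theta>) = 1" by (simp add: cis_mult)
  ultimately show ?thesis by (simp add: c_def)
qed

text \<open>Monodromy: eta(e^{i theta}) e^{-i theta} is 2 pi-periodic in theta, yet its derivative
  is the constant i tau_t.\<close>

lemma Tau_t_eq_0:
  assumes "z \<noteq> 0"
  shows "frechet_derivative Tau (at (t, x, z)) (1, 0, 0) = 0"
proof -
  define c where "c = frechet_derivative Tau (at (t, 0, 1)) (1, 0, 0)"
  define h where "h = (\<lambda>\<theta>. \<eta> t 0 (cis \<theta>) * cis (- \<theta>) - \<i> * complex_of_real c * complex_of_real \<theta>)"
  have "(h has_vector_derivative 0) (at \<theta>)" for \<theta>
    using has_vector_derivative_diff[OF has_vector_derivative_eta_on_circle[of t]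
        has_vector_derivative_mult_right[where a = "\<i> * complex_of_real c",
          OF has_vector_derivative_complex_of_real[OF has_vector_derivative_id]]]
    by (simp add: h_def c_def)
  from has_vector_derivative_zero_imp_eq[OF this, of "2 * pi" 0]
  have "c = 0" by (simp add: h_def complex_eq_iff)
  then show ?thesis using Tau_t_eq[OF assms] by (simp add: c_def)
qed

lemma tau_const: "\<tau> t x z = \<tau> 0 0 1"
proof -
  have "((\<lambda>s. \<tau> s 0 1) has_vector_derivative 0) (at s)" for s
    using has_vector_derivative_smooth_t[OF smooth_Tau, of 0 1 s] Tau_t_eq_0[of 1 s 0] by simp
  from has_vector_derivative_zero_imp_eq[OF this] have "\<tau> s 0 1 = \<tau> 0 0 1" for s .
  then have off_zero: "\<tau> t x w = \<tau> 0 0 1" if "w \<noteq> 0" for w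
    using tau_eq_off_zero[OF that] by simp
  from smooth_section_eq_at_0[OF smooth_Tau continuous_const off_zero]
  show ?thesis using off_zero by (cases "z = 0") simp_all
qed

lemma Eta_z_eq:
  assumes "z \<noteq> 0"
  shows "frechet_derivative Eta (at (t, x, z)) (0, 0, a) = \<eta> t x z / z * a"
  using Eta_z_via_Tau[OF assms] Tau_z_eq_0[OF assms] Tau_t_eq_0[OF assms] by simp

lemma eta_linear: "\<eta> t x z = \<eta> t x 1 * z"
proof -
  define S where "S = - {0 :: complex}"
  define f where "f = (\<lambda>w. \<eta> t x w * inverse w)"
  have "open S" "connected S"
    unfolding S_def by (auto intro: connected_punctured_universe)
  moreover have "(f has_derivative (\<lambda>h. 0)) (at w)" if "w \<in> S" for w
  proof -
    have w: "w \<noteq> 0" using that by (simp add: S_def)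
    have "((\<lambda>w. (t, x, w)) has_derivative (\<lambda>h. (0, 0, h))) (at w)"
      by (auto intro!: derivative_eq_intros)
    from has_derivative_compose[OF this smooth_has_derivative[OF smooth_Eta]]
    have "((\<lambda>w. \<eta> t x w) has_derivative (\<lambda>h. frechet_derivative Eta (at (t, x, w)) (0, 0, h))) (at w)"
      by simp
    from has_derivative_mult[OF this has_derivative_inverse'[OF w]]
    have "(f has_derivative (\<lambda>h. \<eta> t x w * - (inverse w * h * inverse w)
                                 + frechet_derivative Eta (at (t, x, w)) (0, 0, h) * inverse w)) (at w)"
      by (simp add: f_def)
    moreover have "\<eta> t x w * - (inverse w * h * inverse w) + frechet_derivative Eta (at (t, x, w)) (0, 0, h) * inverse w = 0"
      for h using Eta_z_eq[OF w] w by (simp add: field_simps)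
    ultimately show ?thesis by (simp only:)
  qed
  ultimately have f_eq: "f w = f 1" if "w \<noteq> 0" for w
    by (rule has_derivative_zero_unique_connected) (auto simp: S_def that)
  then have off_zero: "\<eta> t x w = \<eta> t x 1 * w" if "w \<noteq> 0" for w
  proof -
    have "\<eta> t x w = \<eta> t x w * inverse w * w" using that by simp
    also have "\<dots> = \<eta> t x 1 * w" using f_eq[OF that] by (simp add: f_def)
    finally show ?thesis .
  qed
  have "isCont (\<lambda>w. \<eta> t x 1 * w) 0" by (intro continuous_intros)
  from smooth_section_eq_at_0[OF smooth_Eta this off_zero]
  show ?thesis by (cases "z = 0") (auto intro: off_zero)
qed

lemma Eta_linear: "Eta (t, x, z) = Eta (t, x, 1) * z"
  unfolding prod.case by (rule eta_linear)

lemma Eta_t_linear: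
  "frechet_derivative Eta (at (t, x, z)) (1, 0, 0) = frechet_derivative Eta (at (t, x, 1)) (1, 0, 0) * z"
  using frechet_derivative_linear_in_last[OF smooth_Eta Eta_linear] .

lemma Eta_x_linear:
  "frechet_derivative Eta (at (t, x, z)) (0, 1, 0) = frechet_derivative Eta (at (t, x, 1)) (0, 1, 0) * z"
  using frechet_derivative_linear_in_last[OF smooth_Eta Eta_linear] .

lemma Eta_xx_linear:
  "frechet_derivative (\<lambda>q. frechet_derivative Eta (at q) (0, 1, 0)) (at (t, x, z)) (0, 1, 0)
     = frechet_derivative (\<lambda>q. frechet_derivative Eta (at q) (0, 1, 0)) (at (t, x, 1)) (0, 1, 0) * z"
  using frechet_derivative_linear_in_last[OF smooth_frechet_derivative[OF smooth_Eta] Eta_x_linear] .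

lemma Eta_z_eq_eta_1: "frechet_derivative Eta (at (t, x, z)) (0, 0, h) = \<eta> t x 1 * h"
proof -
  have "Eta ((t, x, z) + (r - 0) *\<^sub>R (0, 0, h)) = \<eta> t x 1 * (z + complex_of_real r * h)" for r
    using eta_linear[of t x "z + complex_of_real r * h"] by (simp add: scaleR_conv_of_real)
  then have "((\<lambda>r. Eta ((t, x, z) + (r - 0) *\<^sub>R (0, 0, h))) has_vector_derivative \<eta> t x 1 * h) (at 0)"
    using has_vector_derivative_mult_right[OF has_vector_derivative_complex_line] by simp
  with has_vector_derivative_smooth_along_line[OF smooth_Eta, of "(t, x, z)" 0 "(0, 0, h)" 0]
  show ?thesis by (simp add: vector_derivative_unique_at)
qed

lemma determining_equation_eta_linear:
  assumes "z \<noteq> 0"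
  shows "z * (\<i> * frechet_derivative Eta (at (t, x, 1)) (1, 0, 0)
              + frechet_derivative (\<lambda>q. frechet_derivative Eta (at q) (0, 1, 0)) (at (t, x, 1)) (0, 1, 0))
         + complex_of_real (\<gamma> * Re (\<eta> t x 1)) * NL \<gamma> z = 0"
proof -
  have "\<i> * (frechet_derivative Eta (at (t, x, 1)) (1, 0, 0) * z)
          + frechet_derivative (\<lambda>q. frechet_derivative Eta (at q) (0, 1, 0)) (at (t, x, 1)) (0, 1, 0) * z
          + (\<eta> t x 1 + complex_of_real (\<gamma> * Re (\<eta> t x 1))) * NL \<gamma> z
        = NL \<gamma> z / z * (\<eta> t x 1 * z)"
    using determining_equation_const[OF assms, of t x]
    unfolding Eta_t_linear[of t x z] Eta_xx_linear[of t x z] eta_linear[of t x z] dNL_mult .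
  then show ?thesis using assms by (simp add: field_simps)
qed

lemma Re_eta_1_eq_0: "Re (\<eta> t x 1) = 0"
  and Schroedinger_eta_1:
    "\<i> * frechet_derivative Eta (at (t, x, 1)) (1, 0, 0)
     + frechet_derivative (\<lambda>q. frechet_derivative Eta (at q) (0, 1, 0)) (at (t, x, 1)) (0, 1, 0) = 0"
proof -
  define K where "K = \<i> * frechet_derivative Eta (at (t, x, 1)) (1, 0, 0)
     + frechet_derivative (\<lambda>q. frechet_derivative Eta (at q) (0, 1, 0)) (at (t, x, 1)) (0, 1, 0)"
  define r where "r = \<gamma> * Re (\<eta> t x 1)"
  have one: "K + complex_of_real r = 0"
    using determining_equation_eta_linear[of 1 t x] by (simp add: K_def r_def NL_def)
  have two: "2 * K + complex_of_real r * (complex_of_real (2 powr \<gamma>) * 2) = 0"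
    using determining_equation_eta_linear[of 2 t x] by (simp add: K_def r_def NL_def)
  have "complex_of_real r * (complex_of_real (2 powr \<gamma>) * 2 - 2) = 0"
    using one two by (simp add: eq_neg_iff_add_eq_0[symmetric] algebra_simps)
  moreover have "complex_of_real (2 powr \<gamma>) * 2 - 2 \<noteq> 0"
    using gamma_nonzero by (simp add: complex_eq_iff)
  ultimately have "r = 0" by simp
  then show "Re (\<eta> t x 1) = 0" using gamma_nonzero by (simp add: r_def)
  from one \<open>r = 0\<close> show "K = 0" by simp
qed

lemma Eta_direction_0_1_1:
  "frechet_derivative Eta (at (t, y, w)) (0, 1, 1) = frechet_derivative Eta (at (t, y, 1)) (0, 1, 0) * w + \<eta> t y 1"
proof -
  have "frechet_derivative Eta (at (t, y, w)) (0, 1, 1)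
          = frechet_derivative Eta (at (t, y, w)) (0, 1, 0) + frechet_derivative Eta (at (t, y, w)) (0, 0, 1)"
    using frechet_derivative_smooth_add[OF smooth_Eta, of "(t, y, w)" "(0, 1, 0)" "(0, 0, 1)"] by simp
  then show ?thesis by (simp add: Eta_x_linear[of t y w] Eta_z_eq_eta_1)
qed

text \<open>Test jet psi = 1 + (y - x): along it the second x-derivative of eta picks up
  twice eta_x, which must therefore vanish.\<close>

lemma Eta_x_eq_0: "frechet_derivative Eta (at (t, x, 1)) (0, 1, 0) = 0"
proof -
  let ?F = "\<lambda>q. frechet_derivative Eta (at q) (0, 1, 1)"
  let ?\<phi>x = "\<lambda>y. frechet_derivative Eta (at (t, y, 1)) (0, 1, 0)"
  let ?\<phi>xx = "frechet_derivative (\<lambda>q. frechet_derivative Eta (at q) (0, 1, 0)) (at (t, x, 1)) (0, 1, 0)"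
  have G_eq: "(\<lambda>y. ?F ((t, x, 1) + (y - x) *\<^sub>R (0, 1, 1)))
               = (\<lambda>y. ?\<phi>x y * (1 + complex_of_real (y - x)) + \<eta> t y 1)"
    by (simp add: Eta_direction_0_1_1 scaleR_conv_of_real algebra_simps)
  have "((\<lambda>y. 1 + complex_of_real (y - x)) has_vector_derivative 1) (at x)"
    by (auto intro!: derivative_eq_intros simp: has_vector_derivative_def scaleR_conv_of_real)
  from has_vector_derivative_add[OF has_vector_derivative_mult[OF
        has_vector_derivative_smooth_x[OF smooth_frechet_derivative[OF smooth_Eta, of "(0, 1, 0)"], of t 1 x] this]
        has_vector_derivative_smooth_x[OF smooth_Eta, of t 1 x]]
  have "((\<lambda>y. ?\<phi>x y * (1 + complex_of_real (y - x)) + \<eta> t y 1) has_vector_derivative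
          ?\<phi>x x * 1 + ?\<phi>xx * (1 + complex_of_real (x - x)) + ?\<phi>x x) (at x)"
    by simp
  then have "((\<lambda>y. ?F ((t, x, 1) + (y - x) *\<^sub>R (0, 1, 1))) has_vector_derivative
               ?\<phi>x x * 1 + ?\<phi>xx * (1 + complex_of_real (x - x)) + ?\<phi>x x) (at x)"
    unfolding G_eq .
  from vector_derivative_unique_at[OF has_vector_derivative_smooth_along_line[
        OF smooth_frechet_derivative[OF smooth_Eta, of "(0, 1, 1)"], of "(t, x, 1)" x "(0, 1, 1)" x] this]
  have "frechet_derivative ?F (at (t, x, 1)) (0, 1, 1) = ?\<phi>xx + 2 * ?\<phi>x x"
    by simp
  moreover have "frechet_derivative ?F (at (t, x, 1)) (0, 1, 1) = ?\<phi>xx"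
    using arg_cong2[where f = minus,
        OF determining_equation[where z = 1 and t = t and x = x and \<alpha> = 0 and \<beta> = 1 and \<mu> = 0]
           determining_equation_const[of 1 t x]]
    by simp
  ultimately show ?thesis by simp
qed

lemma eta_1_const: "\<eta> t x 1 = \<eta> 0 0 1"
proof -
  have "((\<lambda>y. \<eta> t y 1) has_vector_derivative 0) (at y)" for t y
    using has_vector_derivative_smooth_x[OF smooth_Eta, of t 1 y] Eta_x_eq_0[of t y] by simp
  from has_vector_derivative_zero_imp_eq[OF this] have x_const: "\<eta> t x 1 = \<eta> t 0 1" for t x .
  have "((\<lambda>y. frechet_derivative Eta (at (t, y, 1)) (0, 1, 0)) has_vector_derivative 0) (at x)" for t x
    using Eta_x_eq_0 by simp
  with has_vector_derivative_smooth_x[OF smooth_frechet_derivative[OF smooth_Eta]]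
  have "frechet_derivative (\<lambda>q. frechet_derivative Eta (at q) (0, 1, 0)) (at (t, x, 1)) (0, 1, 0) = 0" for t x
    by (blast intro: vector_derivative_unique_at)
  then have "frechet_derivative Eta (at (s, 0, 1)) (1, 0, 0) = 0" for s
    using Schroedinger_eta_1[of s 0] by simp
  then have "((\<lambda>s. \<eta> s 0 1) has_vector_derivative 0) (at s)" for s
    using has_vector_derivative_smooth_t[OF smooth_Eta, of 0 1 s] by simp
  from has_vector_derivative_zero_imp_eq[OF this, of t 0] x_const[of t x] show ?thesis by simp
qed

lemma symmetry_form:
  "\<exists>a b. \<tau> = (\<lambda>t x z. b) \<and> \<xi> = (\<lambda>t x z. 0) \<and> \<eta> = (\<lambda>t x z. \<i> * complex_of_real a * z)"
proof -
  have "\<tau> = (\<lambda>t x z. \<tau> 0 0 1)" using tau_const by (intro ext)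
  moreover have "\<eta> = (\<lambda>t x z. \<i> * complex_of_real (Im (\<eta> 0 0 1)) * z)"
  proof (intro ext)
    fix t x z
    show "\<eta> t x z = \<i> * complex_of_real (Im (\<eta> 0 0 1)) * z"
      using eta_linear[of t x z] eta_1_const[of t x] Re_eta_1_eq_0[of 0 0] by (simp add: complex_eq_iff)
  qed
  ultimately show ?thesis using xi_eq_0 by blast
qed

end

theorem lemma9:
  fixes \<gamma> :: real
  assumes "\<gamma> \<noteq> 0"
  shows "(\<Inter>{max_lie_alg \<gamma> V | V :: real \<Rightarrow> complex. smooth V}) =
         {((\<lambda>t x z. b), (\<lambda>t x z. 0), (\<lambda>t x z. \<i> * complex_of_real a * z)) | a b :: real. True}"
proof (rule equalityI subsetI)+
  fix q
  assume "q \<in> \<Inter>{max_lie_alg \<gamma> V | V :: real \<Rightarrow> complex. smooth V}"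
  moreover obtain \<tau> \<xi> \<eta> where q: "q = (\<tau>, \<xi>, \<eta>)" by (cases q)
  ultimately have "common_symmetry \<gamma> \<tau> \<xi> \<eta>"
    using assms unfolding common_symmetry_def max_lie_alg_def by blast
  with q show "q \<in> {((\<lambda>t x z. b), (\<lambda>t x z. 0), (\<lambda>t x z. \<i> * complex_of_real a * z)) | a b :: real. True}"
    using common_symmetry.symmetry_form by fastforce
next
  show "{((\<lambda>t x z. b), (\<lambda>t x z. 0), (\<lambda>t x z. \<i> * complex_of_real a * z)) | a b :: real. True}
          \<subseteq> \<Inter>{max_lie_alg \<gamma> V | V :: real \<Rightarrow> complex. smooth V}"
    using lie_sym_time_translation_phase_rotation by (auto simp: max_lie_alg_def)
qed

end
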